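(* Let $Q>0$, $\alpha>0$, $\beta\ge1$, and let the inverse demand function be $p(q)=\alpha(Q-q)^{\beta}$ for $0\le q\le Q$ and $p(q)=0$ for $q>Q$. Suppose the cost functions satisfy Assumptions 1, 3 and 4, and that there is a best supplier $k$ whose cost function is linear, $C_k(x)=cx$ with $0<c<\alpha Q^\beta$, and satisfies $C_k'(x)\le C_m'(x)$ for every supplier $m$ and every $x>0$. Then every Cournot equilibrium $\mathbf{x}$ satisfies $$\gamma(\mathbf{x})\ge f\!\left(\Big(\frac{p(0)}{c}\Big)^{(\beta-1)/\beta}\right)\quad\text{and}\quad \gamma(\mathbf{x})\ge f\!\left(\Big(\frac{p(X)}{c}\Big)^{(\beta-1)/\beta}\right),$$ where $X=\sum_n x_n$.
   Context: Cournot model: $N$ suppliers, inverse demand $p$, supplier $n$ has cost $C_n:[0,\infty)\to[0,\infty)$ and chooses $x_n\ge0$; $X=\sum_n x_n$; payoff of $n$ is $x_np(X)-C_n(x_n)$. A Cournot equilibrium is a profile $\mathbf{x}\ge0$ such that no supplier can increase its payoff by unilaterally changing its quantity to any $x\ge0$. $C_n'(0)$ is the right derivative at $0$. Assumption 1: each $C_n$ is convex, continuous, nondecreasing on $[0,\infty)$, continuously differentiable on $(0,\infty)$, with $C_n(0)=0$. Assumption 3: there exists $R>0$ such that $p(R)\le\min_n C_n'(0)$. Assumption 4: $p(0)>\min_n C_n'(0)$. Social welfare of $\mathbf{x}\ge0$: $W(\mathbf{x})=\int_0^X p(q)\,dq-\sum_{n=1}^N C_n(x_n)$; a social optimum $\mathbf{x}^S$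 maximizes $W$. Efficiency: $\gamma(\mathbf{x})=W(\mathbf{x})/W(\mathbf{x}^S)$. For $\overline c\ge1$: $f(\overline c)=\dfrac{\phi^2+2}{\phi^2+2\phi+\overline c}$ with $\phi=\max\left\{\dfrac{2-\overline c+\sqrt{\overline c^{\,2}-4\overline c+12}}{2},1\right\}$. *)

theory Defs
  imports "HOL-Analysis.Analysis"
begin

definition total :: "nat \<Rightarrow> (nat \<Rightarrow> real) \<Rightarrow> real" where
  "total N x = (\<Sum>n<N. x n)"

definition payoff :: "nat \<Rightarrow> (real \<Rightarrow> real) \<Rightarrow> (nat \<Rightarrow> real \<Rightarrow> real) \<Rightarrow> (nat \<Rightarrow> real) \<Rightarrow> nat \<Rightarrow> real" where
  "payoff N p C x n = x n * p (total N x) - C n (x n)"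

definition cournot_eq :: "nat \<Rightarrow> (real \<Rightarrow> real) \<Rightarrow> (nat \<Rightarrow> real \<Rightarrow> real) \<Rightarrow> (nat \<Rightarrow> real) \<Rightarrow> bool" where
  "cournot_eq N p C x \<longleftrightarrow> (\<forall>n<N. 0 \<le> x n) \<and>
     (\<forall>n<N. \<forall>y\<ge>0. payoff N p C (x(n := y)) n \<le> payoff N p C x n)"

definition welfare :: "nat \<Rightarrow> (real \<Rightarrow> real) \<Rightarrow> (nat \<Rightarrow> real \<Rightarrow> real) \<Rightarrow> (nat \<Rightarrow> real) \<Rightarrow> real" where
  "welfare N p C x = integral {0..total N x} p - (\<Sum>n<N. C n (x n))"

definition social_opt :: "nat \<Rightarrow> (real \<Rightarrow> real) \<Rightarrow> (nat \<Rightarrow> real \<Rightarrow> real) \<Rightarrow> (nat \<Rightarrow> real) \<Rightarrow> bool" where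
  "social_opt N p C xS \<longleftrightarrow> (\<forall>n<N. 0 \<le> xS n) \<and>
     (\<forall>y. (\<forall>n<N. 0 \<le> y n) \<longrightarrow> welfare N p C y \<le> welfare N p C xS)"

definition rderiv0 :: "(real \<Rightarrow> real) \<Rightarrow> real" where
  "rderiv0 f = (THE d. (f has_real_derivative d) (at_right 0))"

definition assm1 :: "(real \<Rightarrow> real) \<Rightarrow> bool" where
  "assm1 f \<longleftrightarrow> convex_on {0..} f \<and> continuous_on {0..} f \<and> mono_on {0..} f \<and>
     (\<exists>D. (\<forall>x>0. (f has_real_derivative D x) (at x)) \<and> continuous_on {0<..} D) \<and>
     f 0 = 0"

definition min_rderiv0 :: "nat \<Rightarrow> (nat \<Rightarrow> real \<Rightarrow> real) \<Rightarrow> real" where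
  "min_rderiv0 N C = Min ((\<lambda>n. rderiv0 (C n)) ` {..<N})"

definition phi_fn :: "real \<Rightarrow> real" where
  "phi_fn cb = max ((2 - cb + sqrt (cb^2 - 4*cb + 12)) / 2) 1"

definition f_bound :: "real \<Rightarrow> real" where
  "f_bound cb = ((phi_fn cb)^2 + 2) / ((phi_fn cb)^2 + 2 * phi_fn cb + cb)"

end

theory Submission
  imports Defs
begin

(* Since the best supplier k
   has constant marginal cost c and every other marginal cost is at least c, every cost
   satisfies C_n(y) >= c y, and the social optimum is to let k alone produce the quantity
   XS with p(XS) = c; hence W(xS) = D = integral_0^XS p - c XS.  At a Cournot equilibrium
   with total X, every supplier earns a nonnegative profit and k's cost is c x_k, so
   W(x) >= integral_0^X p - p(X)(X - x_k) - c x_k.  If p(X) <= c this already gives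
   W(x) >= D.  Otherwise k's first-order condition gives p(X) - c <= d x_k with
   d = -p'(X); convexity of p bounds integral_0^X p from below by its tangent at X,
   integral_X^XS p from above by the chord, and (XS - X) d by (p(X) - c) cb whenever
   cb >= (p(X)/c)^((beta-1)/beta); what remains is a quadratic inequality in X that holds
   exactly with the constant f(cb).  Both bounds of the theorem follow since
   (p(X)/c)^((beta-1)/beta) <= (p(0)/c)^((beta-1)/beta). *)

section \<open>The power inverse demand\<close>

definition power_demand :: "real \<Rightarrow> real \<Rightarrow> real \<Rightarrow> real \<Rightarrow> real" where
  "power_demand \<alpha> Q \<beta> q = \<alpha> * max (Q - q) 0 powr \<beta>"

lemma power_demand_eq:
  assumes "\<And>q. p q = (if q \<le> Q then \<alpha> * (Q - q) powr \<beta> else 0)"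
  shows "p = power_demand \<alpha> Q \<beta>"
  using assms by (auto simp: power_demand_def max_def fun_eq_iff)

lemma power_demand_inside: "q \<le> Q \<Longrightarrow> power_demand \<alpha> Q \<beta> q = \<alpha> * (Q - q) powr \<beta>"
  by (simp add: power_demand_def)

lemma power_demand_nonneg: "\<alpha> \<ge> 0 \<Longrightarrow> power_demand \<alpha> Q \<beta> q \<ge> 0"
  by (simp add: power_demand_def)

lemma power_demand_antimono:
  assumes "\<alpha> \<ge> 0" "\<beta> \<ge> 0" "a \<le> b"
  shows "power_demand \<alpha> Q \<beta> b \<le> power_demand \<alpha> Q \<beta> a"
  using assms unfolding power_demand_def by (intro mult_left_mono powr_mono2) (auto simp: max_def)

lemma power_demand_integrable:
  assumes "\<beta> > 0"
  shows "power_demand \<alpha> Q \<beta> integrable_on {a..b}"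
proof (rule integrable_continuous_interval)
  show "continuous_on {a..b} (power_demand \<alpha> Q \<beta>)"
    unfolding power_demand_def
    by (intro continuous_intros continuous_on_powr') (use assms in \<open>auto intro!: continuous_intros\<close>)
qed

lemma power_demand_attains_price:
  assumes "\<alpha> > 0" "\<beta> > 0" "Q > 0" "0 < c" "c < \<alpha> * Q powr \<beta>"
  obtains XS where "0 < XS" "XS < Q" "power_demand \<alpha> Q \<beta> XS = c"
proof
  define s where "s = (c / \<alpha>) powr (1 / \<beta>)"
  have s: "s > 0" unfolding s_def using assms by simp
  have "s < (Q powr \<beta>) powr (1 / \<beta>)" unfolding s_def
    using assms by (intro powr_less_mono2) (auto simp: pos_divide_less_eq mult.commute)
  also have "\<dots> = Q" using assms by (simp add: powr_powr)
  finally show "0 < Q - s" "Q - s < Q" using s by auto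
  have "\<alpha> * s powr \<beta> = c" unfolding s_def using assms by (simp add: powr_powr)
  then show "power_demand \<alpha> Q \<beta> (Q - s) = c" using s by (simp add: power_demand_def)
qed

section \<open>Integral estimates from convexity\<close>

lemma powr_above_tangent:
  fixes \<beta> s u :: real
  assumes "\<beta> \<ge> 1" "s > 0" "u > 0"
  shows "\<beta> * s powr (\<beta> - 1) * (u - s) \<le> u powr \<beta> - s powr \<beta>"
proof -
  have "(\<beta> * s powr (\<beta> - 1)) * (u - s) \<le> u powr \<beta> - s powr \<beta>"
  proof (rule f''_imp_f'[where C="{0<..}" and f="\<lambda>x. x powr \<beta>" and f'="\<lambda>x. \<beta> * x powr (\<beta> - 1)"
        and f''="\<lambda>x. \<beta> * ((\<beta> - 1) * x powr (\<beta> - 1 - 1))"])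
    fix x :: real assume x: "x \<in> {0<..}"
    show "DERIV (\<lambda>x. x powr \<beta>) x :> \<beta> * x powr (\<beta> - 1)"
      using x by (auto intro!: derivative_eq_intros)
    show "DERIV (\<lambda>x. \<beta> * x powr (\<beta> - 1)) x :> \<beta> * ((\<beta> - 1) * x powr (\<beta> - 1 - 1))"
      using x by (auto intro!: derivative_eq_intros)
    show "0 \<le> \<beta> * ((\<beta> - 1) * x powr (\<beta> - 1 - 1))"
      using x assms by auto
  qed (use assms in auto)
  then show ?thesis by simp
qed

lemma affine_has_integral:
  fixes a b lo hi :: real
  assumes "lo \<le> hi"
  shows "((\<lambda>q. a + b * (hi - q)) has_integral (a * (hi - lo) + b * (hi - lo)^2 / 2)) {lo..hi}"
proof -
  have "((\<lambda>q. a + b * (hi - q)) has_integral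
      ((\<lambda>q. a * q - b * (hi - q)^2/2) hi - (\<lambda>q. a * q - b * (hi - q)^2/2) lo)) {lo..hi}"
    using assms
    by (intro fundamental_theorem_of_calculus)
       (auto intro!: derivative_eq_intros
             simp: has_real_derivative_iff_has_vector_derivative[symmetric] field_simps)
  then show ?thesis by (simp add: power2_eq_square algebra_simps)
qed

text \<open>Below the choke quantity, the area under the demand exceeds the area under its
  tangent at the right endpoint Z (slope -alpha*beta*(Q-Z) powr (beta-1)).\<close>
lemma power_demand_integral_ge_tangent:
  fixes \<alpha> \<beta> Q Z :: real
  assumes a: "\<alpha> > 0" and b: "\<beta> \<ge> 1" and Z: "0 \<le> Z" "Z < Q"
  defines "p \<equiv> power_demand \<alpha> Q \<beta>"
  shows "p Z * Z + \<alpha> * \<beta> * (Q - Z) powr (\<beta> - 1) * Z^2 / 2 \<le> integral {0..Z} p"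
proof -
  let ?d = "\<alpha> * \<beta> * (Q - Z) powr (\<beta> - 1)"
  have tangent: "((\<lambda>q. p Z + ?d * (Z - q)) has_integral (p Z * (Z - 0) + ?d * (Z - 0)^2 / 2)) {0..Z}"
    by (rule affine_has_integral) (use Z in auto)
  have int: "(p has_integral integral {0..Z} p) {0..Z}"
    unfolding p_def by (intro integrable_integral power_demand_integrable) (use b in auto)
  have "p Z * (Z - 0) + ?d * (Z - 0)^2 / 2 \<le> integral {0..Z} p"
  proof (rule has_integral_le[OF tangent int])
    fix q assume q: "q \<in> {0..Z}"
    have "\<beta> * (Q - Z) powr (\<beta> - 1) * ((Q - q) - (Q - Z)) \<le> (Q - q) powr \<beta> - (Q - Z) powr \<beta>"
      using q Z b by (intro powr_above_tangent) auto
    then have "\<alpha> * (\<beta> * (Q - Z) powr (\<beta> - 1) * ((Q - q) - (Q - Z)))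
        \<le> \<alpha> * ((Q - q) powr \<beta> - (Q - Z) powr \<beta>)"
      using a by (intro mult_left_mono) auto
    then show "p Z + ?d * (Z - q) \<le> p q"
      using q Z by (simp add: p_def power_demand_inside algebra_simps)
  qed
  then show ?thesis by simp
qed

text \<open>Between X and XS below the choke quantity, the convex demand lies below its chord,
  so its integral is at most the trapezoid area.\<close>
lemma power_demand_integral_le_chord:
  fixes \<alpha> \<beta> Q X XS :: real
  assumes a: "\<alpha> > 0" and b: "\<beta> \<ge> 1" and X: "X < XS" "XS < Q"
  defines "p \<equiv> power_demand \<alpha> Q \<beta>"
  shows "integral {X..XS} p \<le> (p X + p XS) * (XS - X) / 2"
proof -
  define L where "L = XS - X"
  have L: "L > 0" unfolding L_def using X by simp
  have chord: "((\<lambda>q. p XS + ((p X - p XS) / L) * (XS - q)) has_integral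
      (p XS * (XS - X) + ((p X - p XS) / L) * (XS - X)^2 / 2)) {X..XS}"
    by (rule affine_has_integral) (use X in auto)
  have int: "(p has_integral integral {X..XS} p) {X..XS}"
    unfolding p_def by (intro integrable_integral power_demand_integrable) (use b in auto)
  have "integral {X..XS} p \<le> p XS * (XS - X) + ((p X - p XS) / L) * (XS - X)^2 / 2"
  proof (rule has_integral_le[OF int chord])
    fix q assume q: "q \<in> {X..XS}"
    define \<theta> where "\<theta> = (XS - q) / L"
    have th: "0 \<le> \<theta>" "\<theta> \<le> 1" unfolding \<theta>_def using q L by (auto simp: L_def field_simps)
    have "\<theta> * L = XS - q" unfolding \<theta>_def using L by simp
    then have "Q - q = (1 - \<theta>) *\<^sub>R (Q - XS) + \<theta> *\<^sub>R (Q - X)"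
      unfolding L_def by (simp add: algebra_simps)
    moreover have "(\<lambda>x. x powr \<beta>) ((1 - \<theta>) *\<^sub>R (Q - XS) + \<theta> *\<^sub>R (Q - X))
        \<le> (1 - \<theta>) * (Q - XS) powr \<beta> + \<theta> * (Q - X) powr \<beta>"
      by (rule convex_onD[OF powr_convex[OF b]]) (use th X in auto)
    ultimately have "\<alpha> * (Q - q) powr \<beta> \<le> \<alpha> * ((1 - \<theta>) * (Q - XS) powr \<beta> + \<theta> * (Q - X) powr \<beta>)"
      using a by (intro mult_left_mono) auto
    moreover have "((p X - p XS) / L) * (XS - q) = (p X - p XS) * \<theta>"
      unfolding \<theta>_def by simp
    ultimately show "p q \<le> p XS + ((p X - p XS) / L) * (XS - q)"
      using q X by (simp add: p_def power_demand_inside algebra_simps)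
  qed
  also have "\<dots> = (p X + p XS) * (XS - X) / 2"
    using L unfolding L_def by (simp add: power2_eq_square field_simps)
  finally show ?thesis .
qed

text \<open>The quantity gap s - s0 times the slope at s is controlled by the price gap
  scaled by (P/c) powr ((beta-1)/beta), where P = alpha*s^beta and c = alpha*s0^beta.\<close>
lemma powr_gap_bound:
  fixes \<alpha> \<beta> s0 s :: real
  assumes a: "\<alpha> > 0" and b: "\<beta> \<ge> 1" and s: "0 < s0" "s0 \<le> s"
  shows "(s - s0) * (\<alpha> * \<beta> * s powr (\<beta> - 1))
    \<le> (\<alpha> * s powr \<beta> - \<alpha> * s0 powr \<beta>) * ((s / s0) powr \<beta>) powr ((\<beta> - 1) / \<beta>)"
proof -
  define r where "r = (s / s0) powr (\<beta> - 1)"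
  have r: "r \<ge> 0" "((s / s0) powr \<beta>) powr ((\<beta> - 1) / \<beta>) = r"
    unfolding r_def using b by (auto simp: powr_powr)
  have slope: "\<alpha> * \<beta> * s powr (\<beta> - 1) = r * (\<alpha> * \<beta> * s0 powr (\<beta> - 1))"
    unfolding r_def using s by (simp add: powr_divide)
  have "\<beta> * s0 powr (\<beta> - 1) * (s - s0) \<le> s powr \<beta> - s0 powr \<beta>"
    by (rule powr_above_tangent) (use b s in auto)
  then have "(\<alpha> * r) * (\<beta> * s0 powr (\<beta> - 1) * (s - s0)) \<le> (\<alpha> * r) * (s powr \<beta> - s0 powr \<beta>)"
    using a r by (intro mult_left_mono) auto
  then show ?thesis unfolding r(2) slope by (simp add: algebra_simps)
qed

lemma net_surplus_max_at_price_point: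
  fixes p :: "real \<Rightarrow> real"
  assumes int: "\<And>a b. p integrable_on {a..b}"
    and mono: "\<And>a b. a \<le> b \<Longrightarrow> p b \<le> p a"
    and "0 \<le> Y" "0 \<le> Z"
  shows "integral {0..Y} p - p Z * Y \<le> integral {0..Z} p - p Z * Z"
proof (cases "Y \<le> Z")
  case True
  have "integral {0..Y} p + integral {Y..Z} p = integral {0..Z} p"
    using True assms by (intro Henstock_Kurzweil_Integration.integral_combine) (auto intro: int)
  moreover have "integral {Y..Z} (\<lambda>_. p Z) \<le> integral {Y..Z} p"
    by (intro integral_le int integrable_const_ivl mono) auto
  ultimately show ?thesis using True by (simp add: algebra_simps)
next
  case False
  have "integral {0..Z} p + integral {Z..Y} p = integral {0..Y} p"
    using False assms by (intro Henstock_Kurzweil_Integration.integral_combine) (auto intro: int)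
  moreover have "integral {Z..Y} p \<le> integral {Z..Y} (\<lambda>_. p Z)"
    by (intro integral_le int integrable_const_ivl mono) auto
  ultimately show ?thesis using False by (simp add: algebra_simps)
qed


lemma power_demand_pos_imp_below: "0 < power_demand \<alpha> Q \<beta> q \<Longrightarrow> q < Q"
  by (cases "q < Q") (auto simp: power_demand_def)

lemma power_demand_net_surplus_pos:
  assumes "\<alpha> > 0" "\<beta> \<ge> 1" "0 < XS" "XS < Q"
  defines "p \<equiv> power_demand \<alpha> Q \<beta>"
  shows "0 < integral {0..XS} p - p XS * XS"
proof -
  have "0 < \<alpha> * \<beta> * (Q - XS) powr (\<beta> - 1) * XS^2 / 2" using assms by simp
  then show ?thesis
    using power_demand_integral_ge_tangent[of \<alpha> \<beta> XS Q] assms(1-4) unfolding p_def by linarith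
qed

section \<open>The constant f\<close>

lemma phi_fn_root:
  fixes cb :: real
  defines "\<phi>0 \<equiv> (2 - cb + sqrt (cb^2 - 4*cb + 12)) / 2"
  shows "\<phi>0^2 = (2 - cb) * \<phi>0 + 2" "phi_fn cb = max \<phi>0 1" "\<phi>0 < 1 \<Longrightarrow> cb > 3"
proof -
  define r where "r = sqrt (cb^2 - 4*cb + 12)"
  have "cb^2 - 4*cb + 12 = (cb - 2)^2 + 8" by (simp add: power2_eq_square algebra_simps)
  then have disc: "cb^2 - 4*cb + 12 > 0" by (smt (verit) zero_le_power2)
  then have r2: "r^2 = cb^2 - 4*cb + 12" and r0: "r \<ge> 0" unfolding r_def by simp_all
  show "\<phi>0^2 = (2 - cb) * \<phi>0 + 2" unfolding \<phi>0_def r_def[symmetric] using r2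
    by (simp add: power2_eq_square field_simps)
  show "phi_fn cb = max \<phi>0 1" unfolding phi_fn_def \<phi>0_def ..
  assume "\<phi>0 < 1"
  then have "r < cb" unfolding \<phi>0_def r_def by simp
  then have "r^2 < cb^2" using r0 by (simp add: power_strict_mono)
  then show "cb > 3" using r2 by linarith
qed

lemma f_bound_range:
  fixes cb :: real
  assumes "cb \<ge> 0"
  shows "0 < f_bound cb" "f_bound cb \<le> 1"
proof -
  have p1: "phi_fn cb \<ge> 1" unfolding phi_fn_def by simp
  have den: "(phi_fn cb)^2 + 2 * phi_fn cb + cb > 0" using p1 assms
    by (smt (verit) zero_le_power2)
  show "0 < f_bound cb" unfolding f_bound_def using den
    by (smt (verit) divide_pos_pos zero_le_power2)
  show "f_bound cb \<le> 1" unfolding f_bound_def using den p1 assms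
    by (simp add: divide_le_eq_1)
qed

text \<open>The defining property of f: the quadratic inequality
  f(cb) (X^2 + 2tX + cb t^2) <= X^2 + 2t^2 holds for all X >= t > 0.  With phi = phi0 >= 1
  it reduces to (X - phi t)^2 >= 0; with phi = 1 (and then cb > 3) to (X - t)(cb(X + t) - 6t) >= 0.\<close>
lemma f_bound_quadratic:
  fixes cb X t :: real
  assumes cb: "cb \<ge> 0" and t: "t > 0" and Xt: "X \<ge> t"
  shows "f_bound cb * (X^2 + 2*t*X + cb*t^2) \<le> X^2 + 2*t^2"
proof -
  define \<phi>0 where "\<phi>0 = (2 - cb + sqrt (cb^2 - 4*cb + 12)) / 2"
  note root = phi_fn_root[of cb, folded \<phi>0_def]
  show ?thesis
  proof (cases "\<phi>0 \<ge> 1")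
    case True
    then have ph: "phi_fn cb = \<phi>0" using root by simp
    have rel: "\<phi>0 * cb = 2*\<phi>0 + 2 - \<phi>0^2" using root(1) by (simp add: algebra_simps)
    have fb: "f_bound cb = \<phi>0 / (\<phi>0 + 1)"
    proof -
      have "\<phi>0^2 + 2*\<phi>0 + cb > 0" using True cb by (smt (verit) zero_le_power2)
      moreover have "(\<phi>0^2 + 2) * (\<phi>0 + 1) = \<phi>0 * (\<phi>0^2 + 2*\<phi>0 + cb)"
        using rel by (simp add: power2_eq_square algebra_simps)
      ultimately show ?thesis unfolding f_bound_def ph using True by (simp add: field_simps)
    qed
    have "\<phi>0 * (X^2 + 2*t*X + cb*t^2) = \<phi>0 * X^2 + 2*\<phi>0*t*X + (\<phi>0 * cb)*t^2"
      by (simp add: algebra_simps)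
    also have "\<dots> = \<phi>0 * X^2 + 2*\<phi>0*t*X + (2*\<phi>0 + 2 - \<phi>0^2)*t^2"
      by (simp only: rel)
    also have "\<dots> \<le> (\<phi>0 + 1) * (X^2 + 2*t^2)"
      using zero_le_power2[of "X - \<phi>0*t"] by (simp add: power2_eq_square algebra_simps)
    finally show ?thesis unfolding fb using True by (simp add: field_simps)
  next
    case False
    then have ph: "phi_fn cb = 1" and cb3: "cb > 3" using root by auto
    have fb: "f_bound cb = 3 / (3 + cb)" unfolding f_bound_def ph by simp
    have "cb*(X+t) \<ge> 3*(X+t)" using cb3 Xt t by (intro mult_right_mono) auto
    then have "(X - t) * (cb*(X+t) - 6*t) \<ge> 0" using Xt t by (intro mult_nonneg_nonneg) auto
    then have "3 * (X^2 + 2*t*X + cb*t^2) \<le> (3 + cb) * (X^2 + 2*t^2)"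
      by (simp add: power2_eq_square algebra_simps)
    then show ?thesis unfolding fb using cb3 by (simp add: field_simps)
  qed
qed

text \<open>With P the equilibrium price, d the demand
  slope there, A = integral_0^X p - P X and L = XS - X: the equilibrium welfare W is at least
  A + (P - c) xk, the optimal welfare D at most A + (P - c) X + (P - c) L / 2, and the
  tangent, first-order and chord estimates on A, xk and L turn f * D <= W into the
  quadratic inequality for f at t = (P - c) / d.\<close>
lemma surplus_ratio_algebra:
  fixes W D A P c X xk d L cb f :: real
  assumes d: "d > 0" and Pc: "P > c"
    and W: "W \<ge> A + (P - c) * xk"
    and D: "D \<le> A + (P - c) * X + (P - c) * L / 2"
    and A: "A \<ge> d * X^2 / 2"
    and xk: "P - c \<le> d * xk"
    and L: "L * d \<le> (P - c) * cb"
    and f: "0 \<le> f" "f \<le> 1"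
    and quadratic: "f * (X^2 + 2*((P-c)/d)*X + cb*((P-c)/d)^2) \<le> X^2 + 2*((P-c)/d)^2"
  shows "f * D \<le> W"
proof -
  define t where "t = (P - c) / d"
  have Pct: "P - c = d * t" unfolding t_def using d by simp
  have t0: "t > 0" unfolding t_def using d Pc by simp
  have xkt: "xk \<ge> t" unfolding t_def using xk d by (simp add: field_simps)
  have Lt: "L \<le> t * cb" using L d unfolding t_def by (simp add: field_simps)
  have W2: "W \<ge> A + d * t^2"
  proof -
    have "(P - c) * xk \<ge> (P - c) * t" using xkt Pc by (intro mult_left_mono) auto
    then show ?thesis using W Pct by (simp add: power2_eq_square algebra_simps)
  qed
  have D2: "D \<le> A + d*t*X + d*t*(t*cb) / 2"
  proof -
    have "(P - c) * L \<le> (P - c) * (t * cb)" using Lt Pc by (intro mult_left_mono) auto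
    then show ?thesis using D Pct by (simp add: algebra_simps)
  qed
  have fD: "f * D \<le> f * (A + d*t*X + d*t*(t*cb) / 2)" using D2 f by (intro mult_left_mono) auto
  have fA: "(1 - f) * A \<ge> (1 - f) * (d * X^2 / 2)" using A f by (intro mult_left_mono) auto
  have "d/2 * (f * (X^2 + 2*t*X + cb*t^2)) \<le> d/2 * (X^2 + 2*t^2)"
    using quadratic d unfolding t_def[symmetric] by (intro mult_left_mono) auto
  moreover have "d/2 * (X^2 + 2*t^2) - d/2 * (f * (X^2 + 2*t*X + cb*t^2))
      = ((A + d * t^2) - f * (A + d*t*X + d*t*(t*cb) / 2)) - ((1 - f) * A - (1 - f) * (d * X^2 / 2))"
    by (simp add: power2_eq_square field_simps)
  ultimately show ?thesis using W2 fD fA by linarith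
qed

section \<open>Costs\<close>

lemma deriv_linear_on_nonneg:
  fixes g :: "real \<Rightarrow> real"
  assumes "\<And>y. y \<ge> 0 \<Longrightarrow> g y = c * y" "z > 0"
  shows "deriv g z = c"
proof -
  have "((\<lambda>y. c * y) has_real_derivative c) (at z)" by (auto intro!: derivative_eq_intros)
  then have "(g has_real_derivative c) (at z)"
    by (rule has_field_derivative_transform_within_open[where S="{0<..}"]) (use assms in auto)
  then show ?thesis by (rule DERIV_imp_deriv)
qed

text \<open>A cost satisfying Assumption 1 with marginal cost at least c everywhere is at least
  c times the quantity (mean value theorem).\<close>
lemma cost_ge_linear:
  fixes f :: "real \<Rightarrow> real" and c y :: real
  assumes A: "assm1 f" and d: "\<And>z. z > 0 \<Longrightarrow> c \<le> deriv f z" and y: "y \<ge> 0"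
  shows "c * y \<le> f y"
proof (cases "y = 0")
  case True then show ?thesis using A by (simp add: assm1_def)
next
  case False
  then have y0: "y > 0" using y by simp
  from A obtain D where D: "\<And>x. x > 0 \<Longrightarrow> (f has_real_derivative D x) (at x)" and f0: "f 0 = 0"
    and cont: "continuous_on {0..} f" unfolding assm1_def by blast
  have "continuous_on {0..y} f" using cont by (rule continuous_on_subset) auto
  moreover have "\<And>x. 0 < x \<Longrightarrow> x < y \<Longrightarrow> f differentiable (at x)"
    using D real_differentiable_def by blast
  ultimately obtain l z where z: "0 < z" "z < y" "DERIV f z :> l" "f y - f 0 = (y - 0) * l"
    using MVT[OF y0] by blast
  have "c \<le> l" using d[OF z(1)] DERIV_imp_deriv[OF z(3)] by simp
  then show ?thesis using z f0 y by (simp add: mult.commute mult_left_mono)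
qed

section \<open>Cournot equilibria\<close>

lemma total_update:
  assumes k: "k < N"
  shows "total N (x(k := y)) = total N x - x k + y"
proof -
  have split: "\<And>g. (\<Sum>n<N. g n) = g k + (\<Sum>n\<in>{..<N} - {k}. g n)"
    using k by (intro sum.remove) auto
  have "(\<Sum>n\<in>{..<N} - {k}. (x(k := y)) n) = (\<Sum>n\<in>{..<N} - {k}. x n)"
    by (rule sum.cong) auto
  then show ?thesis unfolding total_def using split[of x] split[of "x(k := y)"] by simp
qed

text \<open>Deviating to zero output shows that every supplier's cost is covered by its revenue.\<close>
lemma cournot_cost_le_revenue:
  assumes eq: "cournot_eq N p C x" and n: "n < N" and C0: "C n 0 = 0"
  shows "C n (x n) \<le> p (total N x) * x n"
proof -
  have "payoff N p C (x(n := 0)) n \<le> payoff N p C x n"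
    using eq n by (simp add: cournot_eq_def)
  then show ?thesis using C0 by (simp add: payoff_def mult.commute)
qed

lemma cournot_best_response:
  assumes eq: "cournot_eq N p C x" and k: "k < N" and y: "0 \<le> y"
  shows "y * p (total N x - x k + y) - C k y \<le> x k * p (total N x) - C k (x k)"
proof -
  have "payoff N p C (x(k := y)) k \<le> payoff N p C x k"
    using eq k y by (simp add: cournot_eq_def)
  then show ?thesis using total_update[OF k, of x y] by (simp add: payoff_def)
qed

text \<open>Lower bound on equilibrium welfare: all suppliers other than k have nonnegative profit.\<close>
lemma cournot_welfare_ge:
  assumes eq: "cournot_eq N p C x" and k: "k < N" and C0: "\<And>n. n < N \<Longrightarrow> C n 0 = 0"
  shows "integral {0..total N x} p - p (total N x) * (total N x - x k) - C k (x k)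
    \<le> welfare N p C x"
proof -
  let ?X = "total N x"
  have split: "\<And>g. (\<Sum>n<N. g n) = g k + (\<Sum>n\<in>{..<N} - {k}. g n)"
    using k by (intro sum.remove) auto
  have "(\<Sum>n\<in>{..<N} - {k}. C n (x n)) \<le> (\<Sum>n\<in>{..<N} - {k}. p ?X * x n)"
    using cournot_cost_le_revenue[OF eq] C0 by (intro sum_mono) auto
  also have "\<dots> = p ?X * (?X - x k)"
    using split[of x] by (simp add: total_def sum_distrib_left)
  finally show ?thesis using split[of "\<lambda>n. C n (x n)"] by (simp add: welfare_def)
qed

text \<open>First-order condition of a supplier with constant marginal cost c facing the power
  demand with residual quantity Z: if its output xk were too small, a slight increase would
  raise its profit.\<close>
lemma power_demand_first_order:
  fixes \<alpha> \<beta> Q Z xk c :: real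
  assumes a: "\<alpha> > 0" and xk: "0 \<le> xk" and lt: "Z + xk < Q"
    and best: "\<And>y. y \<ge> 0 \<Longrightarrow> y * power_demand \<alpha> Q \<beta> (Z + y) - c * y
                 \<le> xk * power_demand \<alpha> Q \<beta> (Z + xk) - c * xk"
  shows "power_demand \<alpha> Q \<beta> (Z + xk) - c \<le> \<alpha> * \<beta> * (Q - (Z + xk)) powr (\<beta> - 1) * xk"
proof (rule ccontr)
  assume neg: "\<not> ?thesis"
  define g where "g = (\<lambda>y. y * (\<alpha> * (Q - Z - y) powr \<beta>) - c * y)"
  have "DERIV g xk :> (\<alpha> * (Q - Z - xk) powr \<beta>) + xk * (\<alpha> * (\<beta> * (Q - Z - xk) powr (\<beta> - 1) * (-1))) - c"
    unfolding g_def using lt by (auto intro!: derivative_eq_intros simp: algebra_simps)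
  moreover have "0 < (\<alpha> * (Q - Z - xk) powr \<beta>) + xk * (\<alpha> * (\<beta> * (Q - Z - xk) powr (\<beta> - 1) * (-1))) - c"
    using neg lt by (simp add: power_demand_inside algebra_simps)
  ultimately obtain \<delta> where \<delta>: "\<delta> > 0" "\<And>h. h > 0 \<Longrightarrow> h < \<delta> \<Longrightarrow> g xk < g (xk + h)"
    using DERIV_pos_inc_right by blast
  define h where "h = min \<delta> (Q - Z - xk) / 2"
  have "min \<delta> (Q - Z - xk) \<le> Q - Z - xk" by simp
  then have h: "h > 0" "h < \<delta>" "Z + xk + h < Q" unfolding h_def using \<delta> lt by (auto simp: min_def)
  have "g xk < g (xk + h)" using \<delta> h by auto
  moreover have "g y = y * power_demand \<alpha> Q \<beta> (Z + y) - c * y" if "Z + y \<le> Q" for y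
    unfolding g_def using that by (simp add: power_demand_inside algebra_simps)
  ultimately show False using best[of "xk + h"] xk h lt by (smt (verit))
qed

section \<open>The social optimum\<close>

lemma social_opt_welfare_linear_best:
  assumes opt: "social_opt N p C xS"
    and pint: "\<And>a b. p integrable_on {a..b}" and pmono: "\<And>a b. a \<le> b \<Longrightarrow> p b \<le> p a"
    and k: "k < N" and Ck: "\<And>y. y \<ge> 0 \<Longrightarrow> C k y = c * y"
    and Cge: "\<And>n y. n < N \<Longrightarrow> y \<ge> 0 \<Longrightarrow> c * y \<le> C n y"
    and C0: "\<And>n. n < N \<Longrightarrow> C n 0 = 0"
    and XS: "0 \<le> XS" "p XS = c"
  shows "welfare N p C xS = integral {0..XS} p - c * XS"
proof -
  have upper: "welfare N p C xS \<le> integral {0..XS} p - c * XS"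
  proof -
    define Y where "Y = total N xS"
    have ynn: "\<And>n. n < N \<Longrightarrow> 0 \<le> xS n" using opt by (simp add: social_opt_def)
    have Y0: "0 \<le> Y" unfolding Y_def total_def using ynn by (intro sum_nonneg) auto
    have "c * Y \<le> (\<Sum>n<N. C n (xS n))"
      unfolding Y_def total_def sum_distrib_left using Cge ynn by (intro sum_mono) auto
    then have "welfare N p C xS \<le> integral {0..Y} p - p XS * Y"
      unfolding welfare_def Y_def[symmetric] XS(2) by simp
    also have "\<dots> \<le> integral {0..XS} p - p XS * XS"
      by (rule net_surplus_max_at_price_point[OF pint pmono Y0 XS(1)])
    finally show ?thesis unfolding XS(2) .
  qed
  define e where "e = (\<lambda>n::nat. if n = k then XS else 0)"
  have "(\<Sum>n<N. C n (e n)) = (\<Sum>n<N. if n = k then c * XS else 0)"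
    by (rule sum.cong) (use C0 Ck XS in \<open>auto simp: e_def\<close>)
  moreover have "total N e = XS" unfolding total_def e_def using k by simp
  ultimately have "welfare N p C e = integral {0..XS} p - c * XS"
    using k by (simp add: welfare_def)
  moreover have "welfare N p C e \<le> welfare N p C xS"
    using opt XS(1) by (simp add: social_opt_def e_def)
  ultimately show ?thesis using upper by simp
qed

section \<open>The efficiency bound\<close>

text \<open>The case c < p(X) of the surplus bound: the tangent bound on integral_0^X p, the chord
  bound on integral_X^XS p, the first-order condition of supplier k and the gap bound
  between X and XS feed the algebraic lemma.\<close>
lemma power_demand_surplus_bound:
  fixes \<alpha> Q \<beta> c X xk XS cb :: real
  assumes a: "\<alpha> > 0" and b: "\<beta> \<ge> 1" and c: "c > 0"
    and p: "p = power_demand \<alpha> Q \<beta>"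
    and XS: "XS < Q" "p XS = c"
    and xk: "0 \<le> xk" "xk \<le> X"
    and P: "c < p X"
    and first_order: "p X - c \<le> \<alpha> * \<beta> * (Q - X) powr (\<beta> - 1) * xk"
    and cb: "0 \<le> cb" "(p X / c) powr ((\<beta> - 1) / \<beta>) \<le> cb"
  shows "f_bound cb * (integral {0..XS} p - c * XS)
    \<le> integral {0..X} p - p X * (X - xk) - c * xk"
proof -
  have pmono: "\<And>a b. a \<le> b \<Longrightarrow> p b \<le> p a"
    unfolding p using a b by (intro power_demand_antimono) auto
  have XQ: "X < Q" using P c by (intro power_demand_pos_imp_below[of \<alpha> Q \<beta>]) (simp add: p)
  have XXS: "X < XS" using pmono[of XS X] P XS(2) by (cases "X < XS") auto
  define s s0 where "s = Q - X" and "s0 = Q - XS"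
  define d where "d = \<alpha> * \<beta> * s powr (\<beta> - 1)"
  have s: "0 < s0" "s0 \<le> s" unfolding s_def s0_def using XS XXS by auto
  have d: "d > 0" unfolding d_def using a b s by simp
  have pX: "p X = \<alpha> * s powr \<beta>" and c_eq: "c = \<alpha> * s0 powr \<beta>"
    using XQ XS unfolding p s_def s0_def by (auto simp: power_demand_inside)
  have tangent: "p X * X + d * X^2 / 2 \<le> integral {0..X} p"
    unfolding p d_def s_def by (rule power_demand_integral_ge_tangent) (use a b xk XQ in auto)
  have chord: "integral {X..XS} p \<le> (p X + c) * (XS - X) / 2"
    using power_demand_integral_le_chord[OF a b XXS XS(1)] XS(2) unfolding p by simp
  have split: "integral {0..X} p + integral {X..XS} p = integral {0..XS} p"
    unfolding p using xk XXS power_demand_integrable[of \<beta> \<alpha> Q] b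
    by (intro Henstock_Kurzweil_Integration.integral_combine) auto
  have gap: "(XS - X) * d \<le> (p X - c) * cb"
  proof -
    have "(s / s0) powr \<beta> = p X / c" using s a unfolding pX c_eq by (simp add: powr_divide)
    then have "(XS - X) * d \<le> (p X - c) * (p X / c) powr ((\<beta> - 1) / \<beta>)"
      using powr_gap_bound[OF a b s] unfolding d_def pX c_eq s_def s0_def by simp
    also have "\<dots> \<le> (p X - c) * cb" using cb(2) P by (intro mult_left_mono) auto
    finally show ?thesis .
  qed
  have foc: "p X - c \<le> d * xk" using first_order unfolding d_def s_def by simp
  have "d * xk \<le> d * X" using xk d by (intro mult_left_mono) auto
  then have "p X - c \<le> X * d" using foc by (simp add: mult.commute)
  then have "(p X - c) / d \<le> X" using foc d by (simp add: pos_divide_le_eq mult.commute)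
  then have quadratic: "f_bound cb * (X^2 + 2*((p X - c)/d)*X + cb*((p X - c)/d)^2)
      \<le> X^2 + 2*((p X - c)/d)^2"
    using P d by (intro f_bound_quadratic cb(1)) auto
  show ?thesis
  proof (rule surplus_ratio_algebra[where A = "integral {0..X} p - p X * X",
        OF d P _ _ _ foc gap _ _ quadratic])
    show "integral {0..XS} p - c * XS
        \<le> integral {0..X} p - p X * X + (p X - c) * X + (p X - c) * (XS - X) / 2"
      using chord split by (simp add: field_simps)
    show "d * X^2 / 2 \<le> integral {0..X} p - p X * X" using tangent by simp
    show "0 \<le> f_bound cb" "f_bound cb \<le> 1" using f_bound_range[OF cb(1)] by auto
  qed (simp add: algebra_simps)
qed

lemma cournot_surplus_bound:
  fixes N :: nat and Q \<alpha> \<beta> c XS cb :: real and p :: "real \<Rightarrow> real"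
    and C :: "nat \<Rightarrow> real \<Rightarrow> real" and k :: nat and x :: "nat \<Rightarrow> real"
  assumes a: "\<alpha> > 0" and b: "\<beta> \<ge> 1" and p: "p = power_demand \<alpha> Q \<beta>"
    and C0: "\<And>n. n < N \<Longrightarrow> C n 0 = 0"
    and k: "k < N" and Ck: "\<And>y. y \<ge> 0 \<Longrightarrow> C k y = c * y" and c: "c > 0"
    and eq: "cournot_eq N p C x"
    and XS: "0 \<le> XS" "XS < Q" "p XS = c"
    and cb: "0 \<le> cb" "(p (total N x) / c) powr ((\<beta> - 1) / \<beta>) \<le> cb"
  shows "f_bound cb * (integral {0..XS} p - c * XS) \<le> welfare N p C x"
proof -
  define X where "X = total N x"
  have pint: "\<And>a b. p integrable_on {a..b}"
    unfolding p using b by (intro power_demand_integrable) auto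
  have pmono: "\<And>a b. a \<le> b \<Longrightarrow> p b \<le> p a"
    unfolding p using a b by (intro power_demand_antimono) auto
  have xk: "0 \<le> x k" "x k \<le> X"
    using eq k unfolding X_def total_def cournot_eq_def by (auto intro: member_le_sum)
  have W: "integral {0..X} p - p X * (X - x k) - c * x k \<le> welfare N p C x"
    using cournot_welfare_ge[OF eq k C0] Ck[OF xk(1)] unfolding X_def by simp
  show ?thesis
  proof (cases "p X \<le> c")
    case True
    have "0 \<le> integral {0..XS} p - c * XS"
      using net_surplus_max_at_price_point[OF pint pmono order_refl XS(1)] XS(3) by simp
    then have "f_bound cb * (integral {0..XS} p - c * XS) \<le> integral {0..XS} p - c * XS"
      using f_bound_range[OF cb(1)] by (intro mult_left_le_one_le) auto
    also have "\<dots> \<le> integral {0..XS} p - p X * XS" using True XS(1) by (simp add: mult_right_mono)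
    also have "\<dots> \<le> integral {0..X} p - p X * X"
      by (rule net_surplus_max_at_price_point[OF pint pmono XS(1)]) (use xk in auto)
    also have "\<dots> \<le> welfare N p C x"
      using W cournot_cost_le_revenue[OF eq k C0[OF k]] Ck[OF xk(1)] unfolding X_def
      by (simp add: algebra_simps)
    finally show ?thesis .
  next
    case False
    then have P: "c < p X" by simp
    have XQ: "X < Q" using P c by (intro power_demand_pos_imp_below[of \<alpha> Q \<beta>]) (simp add: p)
    have "y * p (X - x k + y) - c * y \<le> x k * p X - c * x k" if "0 \<le> y" for y
      using cournot_best_response[OF eq k that] Ck[OF that] Ck[OF xk(1)] unfolding X_def by simp
    then have "p X - c \<le> \<alpha> * \<beta> * (Q - X) powr (\<beta> - 1) * x k"
      using power_demand_first_order[OF a xk(1), of "X - x k" Q \<beta> c] XQ unfolding p by simp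
    then show ?thesis
      using power_demand_surplus_bound[OF a b c p XS(2,3) xk P _ cb[folded X_def]] W by simp
  qed
qed

theorem mainTheorem16:
  fixes N :: nat and Q \<alpha> \<beta> c :: real and p :: "real \<Rightarrow> real"
    and C :: "nat \<Rightarrow> real \<Rightarrow> real" and k :: nat and x xS :: "nat \<Rightarrow> real"
  assumes hQ: "Q > 0" and h\<alpha>: "\<alpha> > 0" and h\<beta>: "\<beta> \<ge> 1"
    and hp: "\<And>q. p q = (if q \<le> Q then \<alpha> * (Q - q) powr \<beta> else 0)"
    and A1: "\<And>n. n < N \<Longrightarrow> assm1 (C n)"
    and A3: "\<exists>R>0. p R \<le> min_rderiv0 N C"
    and A4: "p 0 > min_rderiv0 N C"
    and hk: "k < N"
    and hCk: "\<And>y. y \<ge> 0 \<Longrightarrow> C k y = c * y"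
    and hc: "0 < c" "c < \<alpha> * Q powr \<beta>"
    and hbest: "\<And>m y. m < N \<Longrightarrow> y > 0 \<Longrightarrow> deriv (C k) y \<le> deriv (C m) y"
    and heq: "cournot_eq N p C x"
    and hopt: "social_opt N p C xS"
  shows "welfare N p C x / welfare N p C xS \<ge> f_bound ((p 0 / c) powr ((\<beta> - 1) / \<beta>))
       \<and> welfare N p C x / welfare N p C xS \<ge> f_bound ((p (total N x) / c) powr ((\<beta> - 1) / \<beta>))"
proof -
  have p: "p = power_demand \<alpha> Q \<beta>" by (rule power_demand_eq[OF hp])
  obtain XS where XS: "0 < XS" "XS < Q" "p XS = c"
    using power_demand_attains_price[OF h\<alpha> _ hQ hc] h\<beta> unfolding p by auto
  have C0: "\<And>n. n < N \<Longrightarrow> C n 0 = 0" using A1 by (simp add: assm1_def)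
  have Cge: "\<And>n y. n < N \<Longrightarrow> 0 \<le> y \<Longrightarrow> c * y \<le> C n y"
    using cost_ge_linear[OF A1] hbest deriv_linear_on_nonneg[OF hCk] hk by metis
  define D where "D = integral {0..XS} p - c * XS"
  have WS: "welfare N p C xS = D" unfolding D_def
    using social_opt_welfare_linear_best[OF hopt _ _ hk hCk Cge C0] XS h\<alpha> h\<beta>
      power_demand_integrable power_demand_antimono unfolding p by simp
  have D: "D > 0" using power_demand_net_surplus_pos[OF h\<alpha> h\<beta> XS(1,2)] XS(3)
    unfolding D_def p by simp
  have ratio: "f_bound cb \<le> welfare N p C x / welfare N p C xS"
    if "0 \<le> cb" "(p (total N x) / c) powr ((\<beta> - 1) / \<beta>) \<le> cb" for cb
    using cournot_surplus_bound[OF h\<alpha> h\<beta> p C0 hk hCk hc(1) heq _ XS(2,3) that] XS(1) WS D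
    unfolding D_def by (simp add: pos_le_divide_eq)
  have "0 \<le> total N x" using heq unfolding total_def cournot_eq_def by (auto intro: sum_nonneg)
  then have "(p (total N x) / c) powr ((\<beta> - 1) / \<beta>) \<le> (p 0 / c) powr ((\<beta> - 1) / \<beta>)"
    using h\<alpha> h\<beta> hc unfolding p
    by (intro powr_mono2 divide_right_mono power_demand_antimono power_demand_nonneg
        divide_nonneg_pos) auto
  then show ?thesis using ratio by simp
qed

end
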